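(* Let $m,k\in\mathbb{N}$. Then \[ {}_3F_2\left[\begin{array}{r} -2m,\ 1+k,\ 1+k;\\ -2m-k,\ -2m-k;\end{array}1\right]_{2m}=\frac{(1+k)_{m}(1+k)_{m}2^{2m}\left(\frac{1}{2}\right)_m(2+2k)_{2m}}{(1+k)_{2m}(1+k)_{2m}(2+2k)_{m}}. \]
   Context: $\mathbb{N}=\{1,2,3,\dots\}$. For $a\in\mathbb{C}$ and $n\in\mathbb{N}_0$, $(a)_0=1$ and $(a)_n=a(a+1)\cdots(a+n-1)$. For $N\in\mathbb{N}_0$, ${}_3F_2\left[\begin{array}{r} a_1,a_2,a_3;\\ b_1,b_2;\end{array}z\right]_N=\sum_{n=0}^{N}\frac{(a_1)_n(a_2)_n(a_3)_n}{(b_1)_n(b_2)_n}\frac{z^n}{n!}$ (the sum of the first $N+1$ terms), defined whenever $(b_1)_n(b_2)_n\neq0$ for $0\le n\le N$. *)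

theory Defs
  imports Complex_Main
begin

definition hyp3F2_trunc ::
  "complex \<Rightarrow> complex \<Rightarrow> complex \<Rightarrow> complex \<Rightarrow> complex \<Rightarrow> complex \<Rightarrow> nat \<Rightarrow> complex" where
  "hyp3F2_trunc a1 a2 a3 b1 b2 z N =
     (\<Sum>n=0..N. (pochhammer a1 n * pochhammer a2 n * pochhammer a3 n)
                / (pochhammer b1 n * pochhammer b2 n) * z ^ n / of_nat (fact n))"

end

theory Submission
  imports Defs
begin

text \<open>
  Multiplying by (k! (2m+k)!)^2 turns the truncated series into
  S_k = sum_n (-1)^n C(2m,n) ((k+n)! (2m+k-n)!)^2. Zeilberger's algorithm gives the recurrence
    2 (2k+m+2) (2k+m+3) S_(k+1) = 4 (k+m+1)^3 (2k+2m+3) (k+1)^2 S_k,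
  proved by creative telescoping: termwise, the left side minus the right side is G(n+1) - G(n)
  for an explicit certificate G vanishing at n = 0 and n = 2m+1. For k = 0 the sum is (2m)! times
  sum_n (-1)^n n! (N-n)! with N = 2m, which telescopes since
  (N+2) n! (N-n)! = n! (N+1-n)! + (n+1)! (N-n)!. The factorial form of the right-hand side
  satisfies the same recurrence and initial value.
\<close>

lemma pochhammer_1_plus_of_nat:
  "pochhammer (1 + of_nat a :: 'a::field_char_0) n = fact (a + n) / fact a"
  using pochhammer_product'[of "1::'a" a n] by (simp add: pochhammer_fact[symmetric])

lemma pochhammer_minus_of_nat:
  assumes "n \<le> a"
  shows "pochhammer (- of_nat a :: 'a::field_char_0) n = (-1) ^ n * fact a / fact (a - n)"
  using assms pochhammer_1_plus_of_nat[of "a - n" n, where 'a='a]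
  by (simp add: pochhammer_minus add.commute)

definition cleared_term :: "nat \<Rightarrow> nat \<Rightarrow> nat \<Rightarrow> 'a::field_char_0" where
  "cleared_term N k n = (-1) ^ n * of_nat (N choose n) * (fact (k + n) * fact (N + k - n)) ^ 2"

lemma hyp3F2_trunc_eq_cleared_sum:
  "hyp3F2_trunc (- of_nat N) (1 + of_nat k) (1 + of_nat k) (- of_nat (N + k)) (- of_nat (N + k)) 1 N
     = (\<Sum>n=0..N. cleared_term N k n) / (fact k * fact (N + k)) ^ 2"
  unfolding hyp3F2_trunc_def sum_divide_distrib
proof (rule sum.cong)
  fix n assume "n \<in> {0..N}"
  then have "n \<le> N" "n \<le> N + k" by auto
  then show "pochhammer (- of_nat N) n * pochhammer (1 + of_nat k) n * pochhammer (1 + of_nat k) n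
      / (pochhammer (- of_nat (N + k)) n * pochhammer (- of_nat (N + k)) n) * 1 ^ n / of_nat (fact n)
      = cleared_term N k n / (fact k * fact (N + k)) ^ 2"
    unfolding pochhammer_minus_of_nat[OF \<open>n \<le> N\<close>] pochhammer_minus_of_nat[OF \<open>n \<le> N + k\<close>]
      pochhammer_1_plus_of_nat cleared_term_def binomial_fact[OF \<open>n \<le> N\<close>]
    by (simp add: field_simps power2_eq_square add.commute)
qed simp

lemma cleared_term_Suc_param:
  assumes "n \<le> N"
  shows "cleared_term N (Suc k) n = (cleared_term N k n :: 'a::field_char_0)
           * (of_nat k + of_nat n + 1) ^ 2 * (of_nat N + of_nat k + 1 - of_nat n) ^ 2"
proof -
  have "N + Suc k - n = Suc (N + k - n)" using assms by simp
  then show ?thesis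
    using assms by (simp add: cleared_term_def of_nat_diff algebra_simps power2_eq_square)
qed

lemma cleared_term_Suc_index:
  assumes "n \<le> N"
  shows "(cleared_term N k (Suc n) :: 'a::field_char_0) * (of_nat n + 1)
             * (of_nat N + of_nat k - of_nat n) ^ 2
           = - cleared_term N k n * (of_nat N - of_nat n) * (of_nat k + of_nat n + 1) ^ 2"
proof (cases "n = N")
  case False
  then have "n < N" using assms by simp
  have fact_shift:
    "fact (N + k - n) = (of_nat N + of_nat k - of_nat n) * (fact (N + k - Suc n) :: 'a)"
    using \<open>n < N\<close> fact_reduce[of "N + k - n", where 'a='a] by (simp add: of_nat_diff)
  have "Suc n * (N choose Suc n) = (N - n) * (N choose n)"
    by (simp only: binomial_absorption binomial_absorb_comp)
  then have binomial_shift: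
    "of_nat (N choose Suc n) * (of_nat n + 1) = (of_nat N - of_nat n) * (of_nat (N choose n) :: 'a)"
    using \<open>n < N\<close>
    by (metis (mono_tags) of_nat_Suc of_nat_diff of_nat_mult mult.commute less_imp_le add.commute)
  have "(cleared_term N k (Suc n) :: 'a) * (of_nat n + 1) * (of_nat N + of_nat k - of_nat n) ^ 2
      = - ((-1) ^ n * (of_nat (N choose Suc n) * (of_nat n + 1))
          * (fact (k + n) * (of_nat N + of_nat k - of_nat n) * fact (N + k - Suc n)) ^ 2
          * (of_nat k + of_nat n + 1) ^ 2)"
    by (simp add: cleared_term_def power_mult_distrib mult_ac add_ac)
  also have "\<dots> = - ((-1) ^ n * ((of_nat N - of_nat n) * of_nat (N choose n))
          * (fact (k + n) * fact (N + k - n)) ^ 2 * (of_nat k + of_nat n + 1) ^ 2)"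
    unfolding binomial_shift fact_shift by (simp only: mult.assoc)
  also have "\<dots> = - cleared_term N k n * (of_nat N - of_nat n) * (of_nat k + of_nat n + 1) ^ 2"
    by (simp add: cleared_term_def mult_ac)
  finally show ?thesis .
qed (simp add: cleared_term_def)

definition certificate_poly :: "'a::field_char_0 \<Rightarrow> 'a \<Rightarrow> 'a \<Rightarrow> 'a" where
  "certificate_poly M K x = (2*K + M + 2) * x^2 - (2*M + 1) * (2*K + M + 2) * x
     - (4*K^3 + 15*K^2 + 18*K + 7 + M * (9*K^2 + 20*K + 11) + M^2 * (4*K + 4))"

lemma certificate_poly_identity:
  fixes M K x :: "'a::field_char_0"
  shows "2 * (2*K + M + 2) * (2*K + M + 3) * (K + x + 1)^2 * (2*M + K + 1 - x)^2
           - 4 * (K + M + 1)^3 * (2*K + 2*M + 3) * (K + 1)^2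
         = - (2*M - x) * (K + x + 1)^2 * certificate_poly M K (x + 1)
           - x * (2*M + K + 1 - x)^2 * certificate_poly M K x"
  unfolding certificate_poly_def by (simp add: algebra_simps power2_eq_square power3_eq_cube)

definition certificate :: "nat \<Rightarrow> nat \<Rightarrow> nat \<Rightarrow> 'a::field_char_0" where
  "certificate m k n = cleared_term (2*m) k n * of_nat n * (2 * of_nat m + of_nat k + 1 - of_nat n)^2
     * certificate_poly (of_nat m) (of_nat k) (of_nat n)"

lemma cleared_term_telescoping:
  assumes "n \<le> 2*m"
  shows "2 * (2 * of_nat k + of_nat m + 2) * (2 * of_nat k + of_nat m + 3)
           * cleared_term (2*m) (Suc k) n
       - 4 * (of_nat k + of_nat m + 1)^3 * (2 * of_nat k + 2 * of_nat m + 3) * (of_nat k + 1)^2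
           * cleared_term (2*m) k n
       = (certificate m k (Suc n) - certificate m k n :: 'a::field_char_0)"
proof -
  define M K x where "M = (of_nat m :: 'a)" and "K = (of_nat k :: 'a)" and "x = (of_nat n :: 'a)"
  define t where "t = (cleared_term (2*m) k n :: 'a)"
  have param_shift: "cleared_term (2*m) (Suc k) n = t * (K + x + 1)^2 * (2*M + K + 1 - x)^2"
    using cleared_term_Suc_param[OF assms, of k] by (simp add: t_def M_def K_def x_def)
  have certificate_Suc:
    "certificate m k (Suc n) = - t * (2*M - x) * (K + x + 1)^2 * certificate_poly M K (x + 1)"
  proof -
    have "certificate m k (Suc n) = cleared_term (2*m) k (Suc n) * (of_nat n + 1)
            * (of_nat (2*m) + of_nat k - of_nat n)^2 * certificate_poly M K (x + 1)"
      by (simp add: certificate_def M_def K_def x_def algebra_simps)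
    also have "\<dots> = - t * (of_nat (2*m) - of_nat n) * (of_nat k + of_nat n + 1)^2
                        * certificate_poly M K (x + 1)"
      using cleared_term_Suc_index[OF assms, of k, where 'a='a] by (simp add: t_def)
    finally show ?thesis by (simp add: M_def K_def x_def)
  qed
  have certificate_n: "certificate m k n = t * x * (2*M + K + 1 - x)^2 * certificate_poly M K x"
    by (simp add: certificate_def t_def M_def K_def x_def)
  have "2 * (2*K + M + 2) * (2*K + M + 3) * cleared_term (2*m) (Suc k) n
          - 4 * (K + M + 1)^3 * (2*K + 2*M + 3) * (K + 1)^2 * t
      = t * (2 * (2*K + M + 2) * (2*K + M + 3) * (K + x + 1)^2 * (2*M + K + 1 - x)^2
               - 4 * (K + M + 1)^3 * (2*K + 2*M + 3) * (K + 1)^2)"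
    unfolding param_shift by (simp add: algebra_simps)
  also have "\<dots> = t * (- (2*M - x) * (K + x + 1)^2 * certificate_poly M K (x + 1)
                        - x * (2*M + K + 1 - x)^2 * certificate_poly M K x)"
    by (simp only: certificate_poly_identity)
  also have "\<dots> = certificate m k (Suc n) - certificate m k n"
    unfolding certificate_Suc certificate_n by (simp add: algebra_simps)
  finally show ?thesis by (simp add: M_def K_def t_def)
qed

lemma cleared_sum_recurrence:
  "2 * (2 * of_nat k + of_nat m + 2) * (2 * of_nat k + of_nat m + 3)
       * (\<Sum>n=0..2*m. cleared_term (2*m) (Suc k) n)
     = 4 * (of_nat k + of_nat m + 1)^3 * (2 * of_nat k + 2 * of_nat m + 3) * (of_nat k + 1)^2
         * (\<Sum>n=0..2*m. cleared_term (2*m) k n :: 'a::field_char_0)"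
proof -
  have "(\<Sum>n=0..2*m. 2 * (2 * of_nat k + of_nat m + 2) * (2 * of_nat k + of_nat m + 3)
                        * cleared_term (2*m) (Suc k) n
          - 4 * (of_nat k + of_nat m + 1)^3 * (2 * of_nat k + 2 * of_nat m + 3) * (of_nat k + 1)^2
              * cleared_term (2*m) k n)
      = (\<Sum>n=0..2*m. certificate m k (Suc n) - certificate m k n :: 'a)"
    by (intro sum.cong refl cleared_term_telescoping) simp
  also have "\<dots> = certificate m k (Suc (2*m)) - certificate m k 0"
    by (rule sum_Suc_diff) simp
  also have "\<dots> = 0"
    by (simp add: certificate_def cleared_term_def)
  finally show ?thesis
    by (simp add: sum_subtractf sum_distrib_left)
qed

lemma alternating_sum_fact_fact:
  "of_nat (N + 2) * (\<Sum>n=0..N. (-1) ^ n * fact n * fact (N - n))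
     = (1 + (-1) ^ N) * (fact (N + 1) :: 'a::field_char_0)"
proof -
  define D :: "nat \<Rightarrow> 'a" where "D n = (-1) ^ n * fact n * fact (N + 1 - n)" for n
  have "of_nat (N + 2) * ((-1) ^ n * fact n * fact (N - n)) = D n - D (Suc n)" if "n \<le> N" for n
  proof -
    have "N + 1 - n = Suc (N - n)" using that by simp
    then show ?thesis
      using that by (simp add: D_def of_nat_diff algebra_simps)
  qed
  then have "of_nat (N + 2) * (\<Sum>n=0..N. (-1) ^ n * fact n * fact (N - n))
      = (\<Sum>n=0..N. D n - D (Suc n))"
    by (simp add: sum_distrib_left)
  also have "\<dots> = D 0 - D (Suc N)"
    using sum_Suc_diff[of 0 N "\<lambda>n. - D n"] by simp
  also have "\<dots> = (1 + (-1) ^ N) * fact (N + 1)"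
    by (simp add: D_def algebra_simps)
  finally show ?thesis .
qed

lemma cleared_sum_closed_form_0:
  "fact m * fact (m + 1) * (\<Sum>n=0..2*m. cleared_term (2*m) 0 n)
     = fact (2*m) * fact m ^ 2 * (fact (2*m + 1) :: 'a::field_char_0)"
proof -
  define N where "N = 2*m"
  define S :: 'a where "S = (\<Sum>n=0..N. (-1) ^ n * fact n * fact (N - n))"
  have "cleared_term N 0 n = fact N * ((-1) ^ n * fact n * fact (N - n) :: 'a)" if "n \<le> N" for n
    using that by (simp add: cleared_term_def binomial_fact field_simps power2_eq_square)
  then have "(\<Sum>n=0..N. cleared_term N 0 n) = fact N * S"
    by (simp add: S_def sum_distrib_left)
  moreover have "of_nat (m + 1) * S = (fact (N + 1) :: 'a)"
  proof -
    have "2 * (of_nat (m + 1) * S) = 2 * (fact (N + 1) :: 'a)"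
      using alternating_sum_fact_fact[of N, where 'a='a] by (simp add: S_def N_def algebra_simps)
    then show ?thesis by simp
  qed
  moreover have
    "fact m * fact (m + 1) * (fact N * S) = fact N * fact m ^ 2 * (of_nat (m + 1) * S :: 'a)"
    by (simp add: power2_eq_square algebra_simps)
  ultimately show ?thesis
    by (simp add: N_def)
qed

lemma cleared_sum_closed_form:
  "fact m * fact (2*k + m + 1) * (\<Sum>n=0..2*m. cleared_term (2*m) k n)
     = fact k ^ 2 * fact (2*m) * fact (k + m) ^ 2 * (fact (2*k + 2*m + 1) :: 'a::field_char_0)"
proof (induction k)
  case 0
  show ?case using cleared_sum_closed_form_0[of m] by (simp add: mult_ac)
next
  case (Suc k)
  define K M where "K = (of_nat k :: 'a)" and "M = (of_nat m :: 'a)"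
  define S S' :: 'a
    where "S = (\<Sum>n=0..2*m. cleared_term (2*m) k n)"
      and "S' = (\<Sum>n=0..2*m. cleared_term (2*m) (Suc k) n)"
  define R where "R = 4 * (K + M + 1)^3 * (2*K + 2*M + 3) * (K + 1)^2"
  have "2 * (fact m * fact (2 * Suc k + m + 1) * S')
      = fact m * fact (2*k + m + 1) * (2 * (2*K + M + 2) * (2*K + M + 3) * S')"
    by (simp add: K_def M_def algebra_simps)
  also have "\<dots> = R * (fact m * fact (2*k + m + 1) * S)"
    using cleared_sum_recurrence[of k m, where 'a='a]
    by (simp add: K_def M_def R_def S_def S'_def mult_ac)
  also have "\<dots> = R * (fact k ^ 2 * fact (2*m) * fact (k + m) ^ 2 * fact (2*k + 2*m + 1))"
    using Suc.IH by (simp add: S_def)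
  also have "\<dots> = 2 * (fact (Suc k) ^ 2 * fact (2*m) * fact (Suc k + m) ^ 2
                          * fact (2 * Suc k + 2*m + 1))"
    by (simp add: R_def K_def M_def algebra_simps power2_eq_square power3_eq_cube)
  finally show ?case by (simp add: S'_def)
qed

lemma pochhammer_quotient_eq_fact_quotient:
  "(pochhammer (1 + of_nat k) m * pochhammer (1 + of_nat k) m * 2 ^ (2 * m)
      * pochhammer (1 / 2) m * pochhammer (2 + 2 * of_nat k) (2 * m))
    / (pochhammer (1 + of_nat k) (2 * m) * pochhammer (1 + of_nat k) (2 * m)
      * pochhammer (2 + 2 * of_nat k) m)
   = fact k ^ 2 * fact (2*m) * fact (k + m) ^ 2 * fact (2*k + 2*m + 1)
      / (fact m * fact (2*k + m + 1) * (fact k * fact (2*m + k)) ^ 2 :: 'a::field_char_0)"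
proof -
  have shift: "(2 + 2 * of_nat k :: 'a) = 1 + of_nat (2*k + 1)"
    by simp
  have half: "pochhammer (1 / 2) m = fact (2 * m) / (2 ^ (2 * m) * fact m :: 'a)"
    by (simp add: fact_double)
  show ?thesis
    unfolding shift half pochhammer_1_plus_of_nat
    by (simp add: field_simps power2_eq_square add_ac del: fact_Suc)
qed

theorem mainTheorem11:
  fixes m k :: nat
  assumes "m \<ge> 1" and "k \<ge> 1"
  shows "hyp3F2_trunc (- 2 * of_nat m) (1 + of_nat k) (1 + of_nat k)
            (- 2 * of_nat m - of_nat k) (- 2 * of_nat m - of_nat k) 1 (2 * m)
       = (pochhammer (1 + of_nat k) m * pochhammer (1 + of_nat k) m * 2 ^ (2 * m)
            * pochhammer (1 / 2) m * pochhammer (2 + 2 * of_nat k) (2 * m))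
         / (pochhammer (1 + of_nat k) (2 * m) * pochhammer (1 + of_nat k) (2 * m)
            * pochhammer (2 + 2 * of_nat k) m)"
proof -
  \<comment> \<open>The identity holds for all m and k.\<close>
  have "(- 2 * of_nat m :: complex) = - of_nat (2*m)"
    "(- 2 * of_nat m - of_nat k :: complex) = - of_nat (2*m + k)"
    by simp_all
  then have "hyp3F2_trunc (- 2 * of_nat m) (1 + of_nat k) (1 + of_nat k)
            (- 2 * of_nat m - of_nat k) (- 2 * of_nat m - of_nat k) 1 (2 * m)
      = (\<Sum>n=0..2*m. cleared_term (2*m) k n) / (fact k * fact (2*m + k)) ^ 2"
    using hyp3F2_trunc_eq_cleared_sum[of "2*m" k] by simp
  also have "\<dots> = fact k ^ 2 * fact (2*m) * fact (k + m) ^ 2 * fact (2*k + 2*m + 1)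
      / (fact m * fact (2*k + m + 1) * (fact k * fact (2*m + k)) ^ 2)"
    using cleared_sum_closed_form[of m k, where 'a=complex]
    by (simp add: nonzero_eq_divide_eq mult_ac del: fact_Suc)
  also have "\<dots> = (pochhammer (1 + of_nat k) m * pochhammer (1 + of_nat k) m * 2 ^ (2 * m)
            * pochhammer (1 / 2) m * pochhammer (2 + 2 * of_nat k) (2 * m))
         / (pochhammer (1 + of_nat k) (2 * m) * pochhammer (1 + of_nat k) (2 * m)
            * pochhammer (2 + 2 * of_nat k) m)"
    by (rule pochhammer_quotient_eq_fact_quotient [symmetric])
  finally show ?thesis .
qed

end
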